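(* Let $G$ be a connected simple graph on $n\ge2$ vertices $v_1,\dots,v_n$, let $\alpha$ be a real number, and suppose the vertices are labeled so that $({}^\alpha m)_1\ge({}^\alpha m)_2\ge\cdots\ge({}^\alpha m)_n$. Let $N=\max_{i\sim j} d_j^\alpha/d_i^\alpha$. Then for $1\le i\le n$, \[\rho(A(G))\le \frac{({}^\alpha m)_i-N+\sqrt{(({}^\alpha m)_i+N)^2+4N\sum_{k=1}^{i-1}\big(({}^\alpha m)_k-({}^\alpha m)_i\big)}}{2}.\] Equality holds if and only if $({}^\alpha m)_1=\cdots=({}^\alpha m)_n$, or there is $t$ with $2\le t\le i$ such that: if $\alpha=0$, $G$ is a bidegreed graph with $d_1=\cdots=d_{t-1}=n-1>d_t=\cdots=d_n$; if $\alpha>0$, $G$ is a bidegreed graph with $({}^\alpha m)_1>({}^\alpha m)_2=\cdots=({}^\alpha m)_n$ and $d_1=n-1>d_2=\cdots=d_n$. (For $\alpha<0$ only the first alternative occurs.)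
   Context: $A(G)$ is the adjacency matrix of $G$; $i\sim j$ means $v_i,v_j$ are adjacent; $d_i$ is the degree of $v_i$. The generalized average degree of $v_i$ is $({}^\alpha m)_i=\frac{\sum_{j\sim i}d_j^\alpha}{d_i^\alpha}$. $\rho(\cdot)$ is the spectral radius (largest eigenvalue for symmetric nonnegative matrices). A bidegreed graph is one whose vertex degrees take exactly two distinct values. An empty sum equals $0$. *)

theory Defs
  imports Complex_Main
begin

text \<open>A simple graph on vertex set {0..<n} (vertex v_(k+1) of the paper is k here),
given by an edge relation E.\<close>

definition simple_graph :: "nat \<Rightarrow> (nat \<Rightarrow> nat \<Rightarrow> bool) \<Rightarrow> bool" where
  "simple_graph n E \<longleftrightarrow> (\<forall>i j. E i j \<longrightarrow> E j i) \<and> (\<forall>i. \<not> E i i)"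

definition connected_graph :: "nat \<Rightarrow> (nat \<Rightarrow> nat \<Rightarrow> bool) \<Rightarrow> bool" where
  "connected_graph n E \<longleftrightarrow>
     (\<forall>u v. u < n \<longrightarrow> v < n \<longrightarrow> (\<lambda>a b. E a b \<and> a < n \<and> b < n)\<^sup>*\<^sup>* u v)"

definition nbrs :: "nat \<Rightarrow> (nat \<Rightarrow> nat \<Rightarrow> bool) \<Rightarrow> nat \<Rightarrow> nat set" where
  "nbrs n E i = {j. j < n \<and> E i j}"

definition deg :: "nat \<Rightarrow> (nat \<Rightarrow> nat \<Rightarrow> bool) \<Rightarrow> nat \<Rightarrow> nat" where
  "deg n E i = card (nbrs n E i)"

definition gavg :: "nat \<Rightarrow> (nat \<Rightarrow> nat \<Rightarrow> bool) \<Rightarrow> real \<Rightarrow> nat \<Rightarrow> real" where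
  "gavg n E \<alpha> i = (\<Sum>j\<in>nbrs n E i. real (deg n E j) powr \<alpha>) / real (deg n E i) powr \<alpha>"

text \<open>Eigenvalues of the adjacency matrix A(G) (real, since A(G) is symmetric).\<close>
definition adj_eigenvalues :: "nat \<Rightarrow> (nat \<Rightarrow> nat \<Rightarrow> bool) \<Rightarrow> real set" where
  "adj_eigenvalues n E = {\<mu>. \<exists>x :: nat \<Rightarrow> real. (\<exists>i<n. x i \<noteq> 0) \<and>
       (\<forall>i<n. (\<Sum>j<n. (if E i j then 1 else 0) * x j) = \<mu> * x i)}"

text \<open>Spectral radius = largest eigenvalue of the symmetric nonnegative matrix A(G).\<close>
definition adj_spectral_radius :: "nat \<Rightarrow> (nat \<Rightarrow> nat \<Rightarrow> bool) \<Rightarrow> real" where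
  "adj_spectral_radius n E = Max (adj_eigenvalues n E)"

definition bidegreed :: "nat \<Rightarrow> (nat \<Rightarrow> nat \<Rightarrow> bool) \<Rightarrow> bool" where
  "bidegreed n E \<longleftrightarrow> card (deg n E ` {0..<n}) = 2"

end

theory Submission
  imports Defs "Jordan_Normal_Form.Spectral_Radius"
begin

(* A weighted Collatz-Wielandt argument.  If x is a positive vector with (A x)_k <= B x_k at
   every vertex, then comparing an eigenvector y with x at a vertex maximising |y_k| / x_k gives
   |mu| <= B for every eigenvalue mu; if B is itself an eigenvalue, the comparison is tight at
   such a vertex and, by connectivity, at every vertex, and conversely equality everywhere makes
   x an eigenvector for B.

   The test vector is x_k = d_k^alpha u_k with u_k = 1 + (m_k - m_i) / (B + N) for k < i and
   u_k = 1 otherwise.  Since B is the larger root of (B - m_i)(B + N) = N sum_{k<i} (m_k - m_i),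
   the slack B x_k - (A x)_k is exactly (m_i - m_k) d_k^alpha for k >= i plus the slacks of the
   estimates d_j^alpha <= N d_k^alpha over the vertices j < i.  Equality therefore says that
   m_k = m_i for k >= i and that every j < i with m_j > m_i is adjacent to all other vertices with
   d_j^alpha = N d_k^alpha; by the sign of alpha this is either impossible (alpha < 0), a set of
   dominating vertices (alpha = 0), or a single dominating vertex with all other degrees equal
   (alpha > 0). *)

lemma nbrs_subset: "nbrs n E k \<subseteq> {..<n}"
  unfolding nbrs_def by auto

lemma finite_nbrs: "finite (nbrs n E k)"
  by (rule finite_subset[OF nbrs_subset]) simp

lemma sum_nbrs: "(\<Sum>j\<in>nbrs n E k. f j) = (\<Sum>j<n. if E k j then f j else 0)"
proof -
  have "(\<Sum>j\<in>{j \<in> {..<n}. E k j}. f j) = (\<Sum>j<n. if E k j then f j else 0)"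
    by (rule sum.inter_filter) simp
  moreover have "nbrs n E k = {j \<in> {..<n}. E k j}" unfolding nbrs_def by auto
  ultimately show ?thesis by simp
qed

lemma adj_sum_eq_nbrs_sum:
  fixes y :: "nat \<Rightarrow> real"
  shows "(\<Sum>j<n. (if E k j then 1 else 0) * y j) = (\<Sum>j\<in>nbrs n E k. y j)"
  unfolding sum_nbrs by (intro sum.cong) auto

lemma finite_adj_eigenvalues: "finite (adj_eigenvalues n E)"
proof -
  define A :: "real mat" where "A = mat n n (\<lambda>(i,j). if E i j then 1 else 0)"
  have A: "A \<in> carrier_mat n n" unfolding A_def by simp
  have "adj_eigenvalues n E \<subseteq> spectrum A"
  proof
    fix \<mu> assume "\<mu> \<in> adj_eigenvalues n E"
    then obtain x where x_nz: "\<exists>i<n. x i \<noteq> 0"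
      and x_eig: "\<forall>i<n. (\<Sum>j<n. (if E i j then 1 else 0) * x j) = \<mu> * x i"
      by (auto simp: adj_eigenvalues_def)
    have "A *\<^sub>v vec n x = \<mu> \<cdot>\<^sub>v vec n x"
    proof (rule eq_vecI)
      fix i assume "i < dim_vec (\<mu> \<cdot>\<^sub>v vec n x)"
      then have i: "i < n" by simp
      have "(A *\<^sub>v vec n x) $ i = (\<Sum>j<n. (if E i j then 1 else 0) * x j)"
        using i unfolding A_def by (simp add: scalar_prod_def lessThan_atLeast0)
      then show "(A *\<^sub>v vec n x) $ i = (\<mu> \<cdot>\<^sub>v vec n x) $ i" using x_eig i by simp
    qed (simp add: A_def)
    moreover have "vec n x \<noteq> 0\<^sub>v n" using x_nz by (metis index_vec index_zero_vec(1))
    ultimately have "eigenvector A (vec n x) \<mu>" using A unfolding eigenvector_def by simp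
    then show "\<mu> \<in> spectrum A" unfolding spectrum_def eigenvalue_def by auto
  qed
  then show ?thesis using card_finite_spectrum(1)[OF A] finite_subset by blast
qed

lemma adj_hermitian_form_real:
  fixes v :: "nat \<Rightarrow> complex"
  assumes sym: "\<And>i j. E i j \<Longrightarrow> E j i"
  shows "(\<Sum>i<n. cnj (v i) * (\<Sum>j<n. (if E i j then 1 else 0) * v j))
    = cnj (\<Sum>i<n. cnj (v i) * (\<Sum>j<n. (if E i j then 1 else 0) * v j))"
proof -
  define a :: "nat \<Rightarrow> nat \<Rightarrow> complex" where "a i j = (if E i j then 1 else 0)" for i j
  have a_sym: "a i j = a j i" for i j using sym unfolding a_def by auto
  have a_real: "cnj (a i j) = a i j" for i j unfolding a_def by simp
  have "(\<Sum>i<n. cnj (v i) * (\<Sum>j<n. a i j * v j)) = (\<Sum>i<n. \<Sum>j<n. a j i * cnj (v i) * v j)"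
    by (simp add: sum_distrib_left a_sym mult_ac)
  also have "\<dots> = (\<Sum>j<n. \<Sum>i<n. a j i * cnj (v i) * v j)" by (rule sum.swap)
  also have "\<dots> = cnj (\<Sum>j<n. cnj (v j) * (\<Sum>i<n. a j i * v i))"
    by (simp add: sum_distrib_left a_real mult_ac)
  finally show ?thesis unfolding a_def .
qed

lemma adj_complex_eigenvalue_real:
  fixes v :: "nat \<Rightarrow> complex"
  assumes sym: "\<And>i j. E i j \<Longrightarrow> E j i"
    and eig: "\<And>i. i < n \<Longrightarrow> (\<Sum>j<n. (if E i j then 1 else 0) * v j) = l * v i"
    and nz: "\<exists>i<n. v i \<noteq> 0"
  shows "Im l = 0"
proof -
  define S where "S = (\<Sum>i<n. cnj (v i) * v i)"
  have "(\<Sum>i<n. cnj (v i) * (\<Sum>j<n. (if E i j then 1 else 0) * v j)) = (\<Sum>i<n. cnj (v i) * (l * v i))"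
    by (intro sum.cong) (simp_all add: eig)
  also have "\<dots> = l * S" unfolding S_def by (simp add: sum_distrib_left mult_ac)
  finally have form: "(\<Sum>i<n. cnj (v i) * (\<Sum>j<n. (if E i j then 1 else 0) * v j)) = l * S" .
  have "l * S = cnj (l * S)"
    using adj_hermitian_form_real[where E = E and n = n and v = v, OF sym] unfolding form .
  moreover have "S = of_real (\<Sum>i<n. (cmod (v i))\<^sup>2)"
    unfolding S_def by (simp add: complex_norm_square[symmetric] mult.commute del: of_real_power)
  then have "cnj S = S" by simp
  ultimately have "l * S = cnj l * S" by (metis complex_cnj_mult)
  moreover obtain i where "i < n" "v i \<noteq> 0" using nz by blast
  then have "(\<Sum>i<n. (cmod (v i))\<^sup>2) > 0" by (intro sum_pos2[of _ i]) auto
  then have "S \<noteq> 0" using \<open>S = of_real (\<Sum>i<n. (cmod (v i))\<^sup>2)\<close> by (metis of_real_eq_0_iff less_irrefl)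
  ultimately have "l = cnj l" by (metis mult_cancel_right)
  then have "Im l = - Im l" by (metis cnj.sel(2))
  then show ?thesis by linarith
qed

lemma adj_eigenvalue_of_complex_eigenvector:
  fixes v :: "nat \<Rightarrow> complex"
  assumes eig: "\<And>i. i < n \<Longrightarrow> (\<Sum>j<n. (if E i j then 1 else 0) * v j) = of_real r * v i"
    and "k < n" "v k \<noteq> 0"
  shows "r \<in> adj_eigenvalues n E"
proof -
  have re: "(\<Sum>j<n. (if E i j then 1 else 0) * Re (v j)) = r * Re (v i)"
    and im: "(\<Sum>j<n. (if E i j then 1 else 0) * Im (v j)) = r * Im (v i)"
    if "i < n" for i
  proof -
    have "Re (\<Sum>j<n. (if E i j then 1 else 0) * v j) = (\<Sum>j<n. (if E i j then 1 else 0) * Re (v j))"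
      and "Im (\<Sum>j<n. (if E i j then 1 else 0) * v j) = (\<Sum>j<n. (if E i j then 1 else 0) * Im (v j))"
      by (auto intro!: sum.cong)
    then show "(\<Sum>j<n. (if E i j then 1 else 0) * Re (v j)) = r * Re (v i)"
      and "(\<Sum>j<n. (if E i j then 1 else 0) * Im (v j)) = r * Im (v i)"
      using eig[OF that] by simp_all
  qed
  show ?thesis
  proof (cases "Re (v k) = 0")
    case False
    then show ?thesis unfolding adj_eigenvalues_def
      using re \<open>k < n\<close> by (intro CollectI exI[of _ "\<lambda>j. Re (v j)"]) auto
  next
    case True
    then have "Im (v k) \<noteq> 0" using \<open>v k \<noteq> 0\<close> by (simp add: complex_eq_iff)
    then show ?thesis unfolding adj_eigenvalues_def
      using im \<open>k < n\<close> by (intro CollectI exI[of _ "\<lambda>j. Im (v j)"]) auto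
  qed
qed

lemma adj_eigenvalues_nonempty:
  assumes "n > 0" and sym: "\<And>i j. E i j \<Longrightarrow> E j i"
  shows "adj_eigenvalues n E \<noteq> {}"
proof -
  define A :: "complex mat" where "A = mat n n (\<lambda>(i,j). if E i j then 1 else 0)"
  have A: "A \<in> carrier_mat n n" unfolding A_def by simp
  obtain l where "l \<in> spectrum A" using spectrum_non_empty[OF A \<open>n > 0\<close>] by auto
  then obtain v where "eigenvector A v l" unfolding spectrum_def eigenvalue_def by auto
  then have v: "v \<in> carrier_vec n" "v \<noteq> 0\<^sub>v n" "A *\<^sub>v v = l \<cdot>\<^sub>v v"
    using A unfolding eigenvector_def by auto
  have eig: "(\<Sum>j<n. (if E i j then 1 else 0) * v $ j) = l * v $ i" if "i < n" for i
  proof -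
    have "(A *\<^sub>v v) $ i = (\<Sum>j<n. (if E i j then 1 else 0) * v $ j)"
      using that v(1) unfolding A_def by (auto simp: scalar_prod_def lessThan_atLeast0)
    moreover have "(l \<cdot>\<^sub>v v) $ i = l * v $ i" using v(1) that by simp
    ultimately show ?thesis using v(3) by simp
  qed
  obtain k where k: "k < n" "v $ k \<noteq> 0"
    using v(1,2) by (metis carrier_vecD eq_vecI index_zero_vec(1,2))
  have "Im l = 0"
    using adj_complex_eigenvalue_real[of E n "\<lambda>j. v $ j", OF sym eig] k by blast
  then have "l = of_real (Re l)" by (simp add: complex_eq_iff)
  then have "Re l \<in> adj_eigenvalues n E"
    using adj_eigenvalue_of_complex_eigenvector[where v = "\<lambda>j. v $ j" and r = "Re l", OF _ k] eig by metis
  then show ?thesis by blast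
qed

lemma adj_eigenvalue_bound_at_max_ratio:
  fixes x y :: "nat \<Rightarrow> real"
  assumes eig: "(\<Sum>j\<in>nbrs n E k. y j) = \<mu> * y k"
    and sub: "(\<Sum>j\<in>nbrs n E k. x j) \<le> B * x k"
    and dom: "\<And>j. j < n \<Longrightarrow> \<bar>y j\<bar> \<le> M * x j"
    and at_k: "\<bar>y k\<bar> = M * x k" and "M > 0" "x k > 0"
  shows "\<bar>\<mu>\<bar> \<le> B"
    and "\<bar>\<mu>\<bar> = B \<Longrightarrow>
      (\<Sum>j\<in>nbrs n E k. x j) = B * x k \<and> (\<forall>j\<in>nbrs n E k. \<bar>y j\<bar> = M * x j)"
proof -
  have dom_nbrs: "\<And>j. j \<in> nbrs n E k \<Longrightarrow> \<bar>y j\<bar> \<le> M * x j"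
    using dom nbrs_subset by blast
  have e1: "\<bar>\<mu>\<bar> * \<bar>y k\<bar> \<le> (\<Sum>j\<in>nbrs n E k. \<bar>y j\<bar>)"
    using eig sum_abs[of y "nbrs n E k"] by (simp add: abs_mult)
  have e2: "(\<Sum>j\<in>nbrs n E k. \<bar>y j\<bar>) \<le> M * (\<Sum>j\<in>nbrs n E k. x j)"
    using sum_mono[OF dom_nbrs] by (simp add: sum_distrib_left)
  have e3: "M * (\<Sum>j\<in>nbrs n E k. x j) \<le> B * \<bar>y k\<bar>"
    using sub \<open>M > 0\<close> at_k by (simp add: algebra_simps)
  have "\<bar>y k\<bar> > 0" using at_k \<open>M > 0\<close> \<open>x k > 0\<close> by simp
  moreover have "\<bar>\<mu>\<bar> * \<bar>y k\<bar> \<le> B * \<bar>y k\<bar>" using e1 e2 e3 by linarith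
  ultimately show "\<bar>\<mu>\<bar> \<le> B" by simp
  assume "\<bar>\<mu>\<bar> = B"
  with e1 have "B * \<bar>y k\<bar> \<le> (\<Sum>j\<in>nbrs n E k. \<bar>y j\<bar>)" by simp
  then have tight1: "(\<Sum>j\<in>nbrs n E k. \<bar>y j\<bar>) = M * (\<Sum>j\<in>nbrs n E k. x j)"
    and tight2: "M * (\<Sum>j\<in>nbrs n E k. x j) = B * \<bar>y k\<bar>"
    using e2 e3 by linarith+
  have "(\<Sum>j\<in>nbrs n E k. M * x j - \<bar>y j\<bar>) = 0"
    using tight1 by (simp add: sum_subtractf sum_distrib_left)
  then have "\<forall>j\<in>nbrs n E k. M * x j - \<bar>y j\<bar> = 0"
    using dom_nbrs finite_nbrs by (subst (asm) sum_nonneg_eq_0_iff) auto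
  moreover have "M * (\<Sum>j\<in>nbrs n E k. x j) = M * (B * x k)"
    using tight2 at_k by (simp only: ac_simps)
  ultimately show "(\<Sum>j\<in>nbrs n E k. x j) = B * x k \<and> (\<forall>j\<in>nbrs n E k. \<bar>y j\<bar> = M * x j)"
    using \<open>M > 0\<close> by simp
qed

lemma max_ratio_dominates:
  fixes x y :: "nat \<Rightarrow> real"
  assumes nz: "\<exists>i<n. y i \<noteq> 0" and pos: "\<forall>k<n. x k > 0"
  defines "M \<equiv> Max ((\<lambda>j. \<bar>y j\<bar> / x j) ` {..<n})"
  shows "M > 0" and "\<And>j. j < n \<Longrightarrow> \<bar>y j\<bar> \<le> M * x j" and "\<exists>k<n. \<bar>y k\<bar> = M * x k"
proof -
  have ratio_le: "\<bar>y j\<bar> / x j \<le> M" if "j < n" for j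
    unfolding M_def using that by simp
  then show "\<bar>y j\<bar> \<le> M * x j" if "j < n" for j
    using that pos by (simp add: divide_le_eq)
  obtain i where "i < n" "y i \<noteq> 0" using nz by blast
  then have "\<bar>y i\<bar> / x i > 0" using pos by simp
  then show "M > 0" using ratio_le[OF \<open>i < n\<close>] by linarith
  have "M \<in> (\<lambda>j. \<bar>y j\<bar> / x j) ` {..<n}"
    unfolding M_def using \<open>i < n\<close> by (intro Max_in) auto
  then show "\<exists>k<n. \<bar>y k\<bar> = M * x k" using pos by force
qed

lemma adj_eigenvector_nbrs_sum:
  fixes y :: "nat \<Rightarrow> real"
  assumes "\<forall>i<n. (\<Sum>j<n. (if E i j then 1 else 0) * y j) = \<mu> * y i" and "k < n"
  shows "(\<Sum>j\<in>nbrs n E k. y j) = \<mu> * y k"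
  using assms by (simp add: adj_sum_eq_nbrs_sum)

lemma abs_adj_eigenvalue_le:
  fixes x :: "nat \<Rightarrow> real"
  assumes "\<mu> \<in> adj_eigenvalues n E" and pos: "\<And>k. k < n \<Longrightarrow> x k > 0"
    and sub: "\<And>k. k < n \<Longrightarrow> (\<Sum>j\<in>nbrs n E k. x j) \<le> B * x k"
  shows "\<bar>\<mu>\<bar> \<le> B"
proof -
  obtain y where nz: "\<exists>i<n. y i \<noteq> 0"
    and eig: "\<forall>i<n. (\<Sum>j<n. (if E i j then 1 else 0) * y j) = \<mu> * y i"
    using assms(1) unfolding adj_eigenvalues_def by blast
  have pos': "\<forall>k<n. x k > 0" using pos by blast
  define M where "M = Max ((\<lambda>j. \<bar>y j\<bar> / x j) ` {..<n})"
  obtain k where "k < n" "\<bar>y k\<bar> = M * x k"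
    using max_ratio_dominates(3)[OF nz pos'] unfolding M_def by blast
  then show ?thesis
    using adj_eigenvalue_bound_at_max_ratio(1)[OF adj_eigenvector_nbrs_sum[OF eig] sub]
      max_ratio_dominates(1,2)[OF nz pos'] pos unfolding M_def by blast
qed

lemma adj_eigenvalue_eq_bound_imp_eq:
  fixes x :: "nat \<Rightarrow> real"
  assumes conn: "connected_graph n E" and "B \<in> adj_eigenvalues n E"
    and pos: "\<And>k. k < n \<Longrightarrow> x k > 0"
    and sub: "\<And>k. k < n \<Longrightarrow> (\<Sum>j\<in>nbrs n E k. x j) \<le> B * x k"
  shows "\<forall>k<n. (\<Sum>j\<in>nbrs n E k. x j) = B * x k"
proof -
  obtain y where nz: "\<exists>i<n. y i \<noteq> 0"
    and eig: "\<forall>i<n. (\<Sum>j<n. (if E i j then 1 else 0) * y j) = B * y i"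
    using assms(2) unfolding adj_eigenvalues_def by blast
  have pos': "\<forall>k<n. x k > 0" using pos by blast
  have "\<bar>B\<bar> = B" using abs_adj_eigenvalue_le[OF assms(2) pos sub] by simp
  define M where "M = Max ((\<lambda>j. \<bar>y j\<bar> / x j) ` {..<n})"
  have M: "M > 0" "\<And>j. j < n \<Longrightarrow> \<bar>y j\<bar> \<le> M * x j"
    using max_ratio_dominates(1,2)[OF nz pos'] unfolding M_def by blast+
  obtain k0 where k0: "k0 < n" "\<bar>y k0\<bar> = M * x k0"
    using max_ratio_dominates(3)[OF nz pos'] unfolding M_def by blast
  have at_max: "(\<Sum>j\<in>nbrs n E k. x j) = B * x k \<and> (\<forall>j\<in>nbrs n E k. \<bar>y j\<bar> = M * x j)"
    if "k < n" "\<bar>y k\<bar> = M * x k" for k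
    using adj_eigenvalue_bound_at_max_ratio(2)[OF adj_eigenvector_nbrs_sum[OF eig that(1)] sub[OF that(1)]
        M(2) that(2) M(1) pos[OF that(1)] \<open>\<bar>B\<bar> = B\<close>] .
  have "\<bar>y k\<bar> = M * x k" if "k < n" for k
  proof -
    have "(\<lambda>a b. E a b \<and> a < n \<and> b < n)\<^sup>*\<^sup>* k0 k"
      using conn k0(1) that unfolding connected_graph_def by blast
    then show ?thesis
    proof (induction rule: rtranclp_induct)
      case base
      then show ?case using k0 by simp
    next
      case (step j k)
      then show ?case using at_max[of j] by (simp add: nbrs_def)
    qed
  qed
  then show ?thesis using at_max by blast
qed

lemma adj_spectral_radius_le_and_eq_iff:
  fixes x :: "nat \<Rightarrow> real"
  assumes "n > 0" and sym: "\<And>i j. E i j \<Longrightarrow> E j i" and conn: "connected_graph n E"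
    and pos: "\<And>k. k < n \<Longrightarrow> x k > 0"
    and sub: "\<And>k. k < n \<Longrightarrow> (\<Sum>j\<in>nbrs n E k. x j) \<le> B * x k"
  shows "adj_spectral_radius n E \<le> B \<and>
    (adj_spectral_radius n E = B \<longleftrightarrow> (\<forall>k<n. (\<Sum>j\<in>nbrs n E k. x j) = B * x k))"
proof -
  have fin: "finite (adj_eigenvalues n E)" by (rule finite_adj_eigenvalues)
  have rho: "adj_spectral_radius n E \<in> adj_eigenvalues n E"
    unfolding adj_spectral_radius_def
    using Max_in[OF fin adj_eigenvalues_nonempty[OF \<open>n > 0\<close> sym]] .
  have le: "adj_spectral_radius n E \<le> B"
    using abs_adj_eigenvalue_le[OF rho pos sub] by simp
  have "B \<in> adj_eigenvalues n E" if "\<forall>k<n. (\<Sum>j\<in>nbrs n E k. x j) = B * x k"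
    unfolding adj_eigenvalues_def
  proof (intro CollectI exI[of _ x] conjI)
    show "\<exists>i<n. x i \<noteq> 0" using pos[of 0] \<open>n > 0\<close> by force
    show "\<forall>i<n. (\<Sum>j<n. (if E i j then 1 else 0) * x j) = B * x i"
      using that by (simp add: adj_sum_eq_nbrs_sum)
  qed
  then have "B \<le> adj_spectral_radius n E" if "\<forall>k<n. (\<Sum>j\<in>nbrs n E k. x j) = B * x k"
    unfolding adj_spectral_radius_def using fin that by simp
  moreover have "\<forall>k<n. (\<Sum>j\<in>nbrs n E k. x j) = B * x k" if "adj_spectral_radius n E = B"
    using adj_eigenvalue_eq_bound_imp_eq[OF conn _ pos sub] rho that by simp
  ultimately show ?thesis using le by fastforce
qed

lemma bidegreedI:
  assumes "\<forall>k<n. deg n E k = a \<or> deg n E k = b" and "a \<noteq> b"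
    and "p < n" "deg n E p = a" "q < n" "deg n E q = b"
  shows "bidegreed n E"
proof -
  have "deg n E ` {0..<n} = {a, b}"
  proof
    show "deg n E ` {0..<n} \<subseteq> {a, b}" using assms(1) by auto
    show "{a, b} \<subseteq> deg n E ` {0..<n}" using assms(3-6) by force
  qed
  then show ?thesis unfolding bidegreed_def using \<open>a \<noteq> b\<close> by simp
qed

locale connected_simple_graph =
  fixes n :: nat and E :: "nat \<Rightarrow> nat \<Rightarrow> bool"
  assumes two_le_n: "2 \<le> n" and simple: "simple_graph n E" and connected: "connected_graph n E"
begin

lemma adj_sym: "E a b \<Longrightarrow> E b a"
  using simple unfolding simple_graph_def by blast

lemma adj_irrefl: "\<not> E a a"
  using simple unfolding simple_graph_def by blast

lemma nbrs_subset_others: "nbrs n E k \<subseteq> {..<n} - {k}"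
  unfolding nbrs_def using adj_irrefl by auto

lemma deg_pos:
  assumes "k < n" shows "deg n E k > 0"
proof -
  define v where "v = (if k = 0 then 1 else 0::nat)"
  have v: "v < n" "v \<noteq> k" using two_le_n unfolding v_def by auto
  have "(\<lambda>a b. E a b \<and> a < n \<and> b < n)\<^sup>*\<^sup>* k v"
    using connected assms v(1) unfolding connected_graph_def by blast
  then obtain j where "E k j" "j < n"
    by (cases rule: converse_rtranclpE) (use v in auto)
  then have "j \<in> nbrs n E k" unfolding nbrs_def by simp
  then show ?thesis unfolding deg_def using finite_nbrs card_gt_0_iff by blast
qed

lemma edge_from_0: "\<exists>b<n. E 0 b"
proof -
  have "nbrs n E 0 \<noteq> {}" using deg_pos[of 0] two_le_n unfolding deg_def by fastforce
  then show ?thesis unfolding nbrs_def by blast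
qed

lemma deg_le:
  assumes "k < n" shows "deg n E k \<le> n - 1"
proof -
  have "deg n E k \<le> card ({..<n} - {k})"
    unfolding deg_def using nbrs_subset_others by (intro card_mono) auto
  also have "\<dots> = n - 1" using assms by simp
  finally show ?thesis .
qed

lemma deg_eq_iff_dominating:
  assumes "k < n"
  shows "deg n E k = n - 1 \<longleftrightarrow> (\<forall>j<n. j \<noteq> k \<longrightarrow> E k j)"
proof
  assume "deg n E k = n - 1"
  then have "card (nbrs n E k) = card ({..<n} - {k})" using assms unfolding deg_def by simp
  then have "nbrs n E k = {..<n} - {k}"
    using nbrs_subset_others by (intro card_subset_eq) auto
  then show "\<forall>j<n. j \<noteq> k \<longrightarrow> E k j" unfolding nbrs_def by auto
next
  assume "\<forall>j<n. j \<noteq> k \<longrightarrow> E k j"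
  then have "nbrs n E k = {..<n} - {k}" unfolding nbrs_def using adj_irrefl by auto
  then show "deg n E k = n - 1" using assms unfolding deg_def by simp
qed

end

locale gavg_ordered_graph = connected_simple_graph +
  fixes \<alpha> :: real and i :: nat
  assumes gavg_antimono: "\<And>k l. k \<le> l \<Longrightarrow> l < n \<Longrightarrow> gavg n E \<alpha> k \<ge> gavg n E \<alpha> l"
    and i_less_n: "i < n"
begin

abbreviation m :: "nat \<Rightarrow> real" where "m \<equiv> gavg n E \<alpha>"

definition dpow :: "nat \<Rightarrow> real" where "dpow k = real (deg n E k) powr \<alpha>"

definition ratio_max :: real where
  "ratio_max = Max {dpow b / dpow a | a b. a < n \<and> b < n \<and> E a b}"

definition bound :: real where
  "bound = (m i - ratio_max + sqrt ((m i + ratio_max)\<^sup>2 + 4 * ratio_max * (\<Sum>k<i. m k - m i))) / 2"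

definition weight :: "nat \<Rightarrow> real" where
  "weight k = (if k < i then 1 + (m k - m i) / (bound + ratio_max) else 1)"

lemma dpow_pos: "k < n \<Longrightarrow> dpow k > 0"
  using deg_pos unfolding dpow_def by simp

lemma nbrs_dpow_sum: "k < n \<Longrightarrow> (\<Sum>j\<in>nbrs n E k. dpow j) = m k * dpow k"
  using dpow_pos unfolding gavg_def dpow_def by simp

lemma m_nonneg: "m k \<ge> 0"
  unfolding gavg_def by (auto intro!: divide_nonneg_nonneg sum_nonneg)

lemma finite_ratio_set: "finite {dpow b / dpow a | a b. a < n \<and> b < n \<and> E a b}"
proof -
  have "{dpow b / dpow a | a b. a < n \<and> b < n \<and> E a b}
      = (\<lambda>(a, b). dpow b / dpow a) ` (Set.filter (\<lambda>(a, b). E a b) ({..<n} \<times> {..<n}))"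
    by force
  then show ?thesis by simp
qed

lemma dpow_le_ratio_max:
  assumes "a < n" "b < n" "E a b" shows "dpow b \<le> ratio_max * dpow a"
proof -
  have "dpow b / dpow a \<le> ratio_max"
    unfolding ratio_max_def using assms finite_ratio_set by (intro Max_ge) auto
  then show ?thesis using dpow_pos[OF assms(1)] by (simp add: divide_le_eq mult.commute)
qed

lemma one_le_ratio_max: "1 \<le> ratio_max"
proof -
  obtain b where "E 0 b" "b < n" using edge_from_0 by blast
  then have "dpow b \<le> ratio_max * dpow 0" "dpow 0 \<le> ratio_max * dpow b"
    using dpow_le_ratio_max adj_sym two_le_n by auto
  moreover have "dpow 0 > 0" "dpow b > 0" using dpow_pos[of 0] dpow_pos[OF \<open>b < n\<close>] two_le_n by auto
  ultimately show ?thesis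
    by (metis less_le_not_le mult_le_cancel_right1 not_le order_trans)
qed

lemma m_ge_m_i: "k < i \<Longrightarrow> m k \<ge> m i"
  using gavg_antimono i_less_n by simp

lemma m_le_m_i: "i \<le> k \<Longrightarrow> k < n \<Longrightarrow> m k \<le> m i"
  using gavg_antimono by simp

lemma bound_ge_m_i: "bound \<ge> m i"
proof -
  have "(\<Sum>k<i. m k - m i) \<ge> 0" using m_ge_m_i by (intro sum_nonneg) simp
  then have "sqrt ((m i + ratio_max)\<^sup>2) \<le> sqrt ((m i + ratio_max)\<^sup>2 + 4 * ratio_max * (\<Sum>k<i. m k - m i))"
    using one_le_ratio_max by (intro real_sqrt_le_mono) simp
  then show ?thesis unfolding bound_def using m_nonneg[of i] one_le_ratio_max by simp
qed

lemma bound_plus_ratio_max_pos: "bound + ratio_max > 0"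
  using bound_ge_m_i m_nonneg[of i] one_le_ratio_max by linarith

lemma bound_root: "(bound - m i) * (bound + ratio_max) = ratio_max * (\<Sum>k<i. m k - m i)"
proof -
  define s where "s = sqrt ((m i + ratio_max)\<^sup>2 + 4 * ratio_max * (\<Sum>k<i. m k - m i))"
  have "(\<Sum>k<i. m k - m i) \<ge> 0" using m_ge_m_i by (intro sum_nonneg) simp
  then have "s\<^sup>2 = (m i + ratio_max)\<^sup>2 + 4 * ratio_max * (\<Sum>k<i. m k - m i)"
    unfolding s_def using one_le_ratio_max by (intro real_sqrt_pow2) simp
  moreover have "(bound - m i) * (bound + ratio_max) = (s\<^sup>2 - (m i + ratio_max)\<^sup>2) / 4"
    unfolding bound_def s_def[symmetric] by (simp add: field_simps power2_eq_square)
  ultimately show ?thesis by simp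
qed

lemma weight_ge_1: "weight k \<ge> 1"
  unfolding weight_def using m_ge_m_i bound_plus_ratio_max_pos by auto

lemma weight_eq_1_iff: "weight k = 1 \<longleftrightarrow> (k < i \<longrightarrow> m k = m i)"
  unfolding weight_def using bound_plus_ratio_max_pos by auto

lemma ratio_max_weight_sum: "ratio_max * (\<Sum>j<i. weight j - 1) = bound - m i"
proof -
  have "(\<Sum>j<i. weight j - 1) = (\<Sum>j<i. m j - m i) / (bound + ratio_max)"
    unfolding weight_def by (simp add: sum_divide_distrib)
  then have "ratio_max * (\<Sum>j<i. weight j - 1)
      = (bound - m i) * (bound + ratio_max) / (bound + ratio_max)"
    using bound_root by simp
  then show ?thesis using bound_plus_ratio_max_pos by simp
qed

definition test_vec :: "nat \<Rightarrow> real" where "test_vec k = dpow k * weight k"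

text \<open>Slack of the estimate \<open>dpow j \<le> ratio_max * dpow k\<close> on the vertices \<open>j < i\<close>,
  where non-neighbours \<open>j \<noteq> k\<close> count with the full term.\<close>

definition gap :: "nat \<Rightarrow> nat \<Rightarrow> real" where
  "gap k j = (if j = k then 0 else ratio_max * dpow k * (weight j - 1))
     - (if E k j then dpow j * (weight j - 1) else 0)"

lemma test_vec_pos: "k < n \<Longrightarrow> test_vec k > 0"
  unfolding test_vec_def using dpow_pos weight_ge_1[of k] by simp

lemma gap_nonneg:
  assumes "k < n" "j < i" shows "gap k j \<ge> 0"
proof -
  have "j < n" using assms i_less_n by simp
  have "weight j - 1 \<ge> 0" using weight_ge_1 by simp
  moreover have "dpow j \<le> ratio_max * dpow k" if "E k j"
    using dpow_le_ratio_max[OF assms(1) \<open>j < n\<close> that] .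
  moreover have "ratio_max * dpow k \<ge> 0" using one_le_ratio_max dpow_pos[OF assms(1)] by simp
  ultimately show ?thesis unfolding gap_def using adj_irrefl by (auto intro: mult_right_mono)
qed

lemma gap_eq_0_iff:
  assumes "k < n" "j < i"
  shows "gap k j = 0 \<longleftrightarrow> m j = m i \<or> j = k \<or> (E k j \<and> dpow j = ratio_max * dpow k)"
proof (cases "m j = m i \<or> j = k")
  case True
  then have "weight j = 1 \<or> j = k" using weight_eq_1_iff by auto
  then show ?thesis unfolding gap_def using True adj_irrefl by auto
next
  case False
  then have "weight j \<noteq> 1" using weight_eq_1_iff assms(2) by simp
  then have "weight j - 1 > 0" using weight_ge_1[of j] by linarith
  moreover have "ratio_max * dpow k > 0" using one_le_ratio_max dpow_pos[OF assms(1)] by simp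
  ultimately show ?thesis unfolding gap_def using False by auto
qed

lemma nbrs_test_vec_sum:
  assumes "k < n"
  shows "(\<Sum>j\<in>nbrs n E k. test_vec j)
    = m k * dpow k + (\<Sum>j<i. if E k j then dpow j * (weight j - 1) else 0)"
proof -
  have "(\<Sum>j\<in>nbrs n E k. test_vec j)
      = (\<Sum>j\<in>nbrs n E k. dpow j) + (\<Sum>j\<in>nbrs n E k. dpow j * (weight j - 1))"
    unfolding test_vec_def by (simp add: sum.distrib[symmetric] algebra_simps)
  also have "(\<Sum>j\<in>nbrs n E k. dpow j * (weight j - 1))
      = (\<Sum>j<n. if E k j then dpow j * (weight j - 1) else 0)"
    by (rule sum_nbrs)
  also have "\<dots> = (\<Sum>j<i. if E k j then dpow j * (weight j - 1) else 0)"
    using i_less_n by (intro sum.mono_neutral_right) (auto simp: weight_def)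
  finally show ?thesis using nbrs_dpow_sum[OF assms] by simp
qed

lemma gap_sum:
  "(\<Sum>j<i. gap k j) = dpow k * (bound - m i) - (if k < i then ratio_max * dpow k * (weight k - 1) else 0)
     - (\<Sum>j<i. if E k j then dpow j * (weight j - 1) else 0)"
proof -
  have "(\<Sum>j<i. if j = k then 0 else ratio_max * dpow k * (weight j - 1))
      = (\<Sum>j<i. ratio_max * dpow k * (weight j - 1))
        - (\<Sum>j<i. if j = k then ratio_max * dpow k * (weight j - 1) else 0)"
    unfolding sum_subtractf[symmetric] by (intro sum.cong) auto
  also have "(\<Sum>j<i. ratio_max * dpow k * (weight j - 1)) = dpow k * (bound - m i)"
    using ratio_max_weight_sum by (simp add: sum_distrib_left[symmetric] mult_ac)
  finally show ?thesis unfolding gap_def sum_subtractf by (simp add: sum.delta')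
qed

lemma test_vec_slack:
  assumes "k < n"
  shows "bound * test_vec k - (\<Sum>j\<in>nbrs n E k. test_vec j)
    = (if i \<le> k then (m i - m k) * dpow k else 0) + (\<Sum>j<i. gap k j)"
proof (cases "k < i")
  case True
  then show ?thesis
    using bound_plus_ratio_max_pos unfolding nbrs_test_vec_sum[OF assms] gap_sum
    by (simp add: test_vec_def weight_def[of k] field_simps)
next
  case False
  then show ?thesis
    unfolding nbrs_test_vec_sum[OF assms] gap_sum
    by (simp add: test_vec_def weight_def algebra_simps)
qed

lemma slack_terms_nonneg:
  assumes "k < n"
  shows "(if i \<le> k then (m i - m k) * dpow k else 0) \<ge> 0" and "(\<Sum>j<i. gap k j) \<ge> 0"
  using m_le_m_i[of k] dpow_pos[OF assms] gap_nonneg[OF assms] assms by (auto intro: sum_nonneg)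

lemma nbrs_test_vec_sum_le: "k < n \<Longrightarrow> (\<Sum>j\<in>nbrs n E k. test_vec j) \<le> bound * test_vec k"
  using test_vec_slack slack_terms_nonneg by fastforce

lemma nbrs_test_vec_sum_eq_iff:
  assumes "k < n"
  shows "(\<Sum>j\<in>nbrs n E k. test_vec j) = bound * test_vec k
    \<longleftrightarrow> (i \<le> k \<longrightarrow> m k = m i) \<and> (\<forall>j<i. gap k j = 0)"
proof -
  have "(\<Sum>j\<in>nbrs n E k. test_vec j) = bound * test_vec k
      \<longleftrightarrow> bound * test_vec k - (\<Sum>j\<in>nbrs n E k. test_vec j) = 0"
    by auto
  also have "\<dots> \<longleftrightarrow> (if i \<le> k then (m i - m k) * dpow k else 0) = 0 \<and> (\<Sum>j<i. gap k j) = 0"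
    unfolding test_vec_slack[OF assms] using slack_terms_nonneg[OF assms] by (rule add_nonneg_eq_0_iff)
  also have "\<dots> \<longleftrightarrow> (i \<le> k \<longrightarrow> m k = m i) \<and> (\<forall>j<i. gap k j = 0)"
    using dpow_pos[OF assms] gap_nonneg[OF assms] by (subst sum_nonneg_eq_0_iff) auto
  finally show ?thesis .
qed

definition tight :: bool where
  "tight \<longleftrightarrow> (\<forall>k. i \<le> k \<and> k < n \<longrightarrow> m k = m i) \<and>
     (\<forall>j<i. m j > m i \<longrightarrow> (\<forall>k<n. k \<noteq> j \<longrightarrow> E k j \<and> dpow j = ratio_max * dpow k))"

lemma nbrs_test_vec_sum_eq_iff_tight:
  "(\<forall>k<n. (\<Sum>j\<in>nbrs n E k. test_vec j) = bound * test_vec k) \<longleftrightarrow> tight"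
proof -
  have "(\<forall>k<n. \<forall>j<i. gap k j = 0)
      \<longleftrightarrow> (\<forall>j<i. m j > m i \<longrightarrow> (\<forall>k<n. k \<noteq> j \<longrightarrow> E k j \<and> dpow j = ratio_max * dpow k))"
    using gap_eq_0_iff m_ge_m_i by (fastforce simp: less_le)
  then show ?thesis
    unfolding tight_def using nbrs_test_vec_sum_eq_iff by blast
qed

lemma adj_spectral_radius_le_bound:
  "adj_spectral_radius n E \<le> bound \<and> (adj_spectral_radius n E = bound \<longleftrightarrow> tight)"
  using adj_spectral_radius_le_and_eq_iff[of n E test_vec bound] two_le_n adj_sym connected
    test_vec_pos nbrs_test_vec_sum_le nbrs_test_vec_sum_eq_iff_tight
  by auto

lemma m_eq_deg_if_regular:
  assumes "\<forall>k<n. deg n E k = d" "k < n"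
  shows "m k = real d"
proof -
  have "(\<Sum>j\<in>nbrs n E k. dpow j) = (\<Sum>j\<in>nbrs n E k. dpow k)"
    using assms nbrs_subset[of n E k] by (intro sum.cong) (auto simp: dpow_def)
  then show ?thesis
    using nbrs_dpow_sum[OF assms(2)] dpow_pos[OF assms(2)] assms unfolding deg_def by simp
qed

lemma dpow_alpha_zero: "\<alpha> = 0 \<Longrightarrow> k < n \<Longrightarrow> dpow k = 1"
  using deg_pos unfolding dpow_def by simp

lemma m_alpha_zero:
  assumes "\<alpha> = 0" "k < n" shows "m k = real (deg n E k)"
proof -
  have "(\<Sum>j\<in>nbrs n E k. dpow j) = (\<Sum>j\<in>nbrs n E k. 1)"
    using dpow_alpha_zero[OF assms(1)] nbrs_subset[of n E k] by (intro sum.cong) auto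
  then show ?thesis
    using nbrs_dpow_sum[OF assms(2)] dpow_alpha_zero[OF assms] unfolding deg_def by simp
qed

lemma ratio_max_alpha_zero:
  assumes "\<alpha> = 0" shows "ratio_max = 1"
proof -
  have "{dpow b / dpow a | a b. a < n \<and> b < n \<and> E a b} = {1}"
  proof
    show "{dpow b / dpow a | a b. a < n \<and> b < n \<and> E a b} \<subseteq> {1}"
      using dpow_alpha_zero[OF assms] by auto
    obtain b where "b < n" "E 0 b" using edge_from_0 by blast
    then have "1 = dpow b / dpow 0 \<and> 0 < n \<and> b < n \<and> E 0 b"
      using dpow_alpha_zero[OF assms] two_le_n by simp
    then show "{1} \<subseteq> {dpow b / dpow a | a b. a < n \<and> b < n \<and> E a b}" by blast
  qed
  then show ?thesis unfolding ratio_max_def by simp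
qed

lemma dpow_inj:
  assumes "\<alpha> \<noteq> 0" "a < n" "b < n" "dpow a = dpow b"
  shows "deg n E a = deg n E b"
proof -
  have "(real (deg n E a) powr \<alpha>) powr (1 / \<alpha>) = (real (deg n E b) powr \<alpha>) powr (1 / \<alpha>)"
    using assms(4) unfolding dpow_def by simp
  then show ?thesis using assms(1) deg_pos[OF assms(2)] deg_pos[OF assms(3)] by (simp add: powr_powr)
qed

definition equality_case_alpha_zero :: "nat \<Rightarrow> bool" where
  "equality_case_alpha_zero t \<longleftrightarrow> \<alpha> = 0 \<and> bidegreed n E \<and> (\<forall>k<t. deg n E k = n - 1) \<and>
     deg n E t < n - 1 \<and> (\<forall>k. t \<le> k \<and> k < n \<longrightarrow> deg n E k = deg n E t)"

definition equality_case_alpha_pos :: bool where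
  "equality_case_alpha_pos \<longleftrightarrow> \<alpha> > 0 \<and> bidegreed n E \<and> m 0 > m 1 \<and>
     (\<forall>k. 1 \<le> k \<and> k < n \<longrightarrow> m k = m 1) \<and> deg n E 0 = n - 1 \<and> deg n E 0 > deg n E 1 \<and>
     (\<forall>k. 1 \<le> k \<and> k < n \<longrightarrow> deg n E k = deg n E 1)"

lemma tight_if_gavg_const:
  assumes "\<forall>k<n. m k = m 0" shows tight
proof -
  have "m k = m 0" if "k < n" for k using assms that by blast
  then have "m k = m i" if "k < n" for k using that i_less_n by metis
  then show ?thesis unfolding tight_def using i_less_n by (metis less_irrefl less_trans)
qed

lemma tight_if_equality_case_alpha_zero:
  assumes case0: "equality_case_alpha_zero t" and "t \<le> i"
  shows tight
proof -
  have "\<alpha> = 0" and full: "\<forall>k<t. deg n E k = n - 1"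
    and tail: "\<forall>k. t \<le> k \<and> k < n \<longrightarrow> deg n E k = deg n E t"
    using case0 unfolding equality_case_alpha_zero_def by blast+
  have m_tail: "m k = m i" if "t \<le> k" "k < n" for k
  proof -
    have "deg n E k = deg n E i"
      using tail[rule_format, of k] tail[rule_format, of i] that \<open>t \<le> i\<close> i_less_n by simp
    then show ?thesis using m_alpha_zero[OF \<open>\<alpha> = 0\<close>] that i_less_n by simp
  qed
  show tight unfolding tight_def
  proof (rule conjI; intro allI impI)
    fix k assume "i \<le> k \<and> k < n"
    then show "m k = m i" using m_tail[of k] \<open>t \<le> i\<close> by simp
  next
    fix j k assume "j < i" "m j > m i" "k < n" "k \<noteq> j"
    have "j < t"
    proof (rule ccontr)
      assume "\<not> j < t"
      then have "m j = m i" using m_tail[of j] \<open>j < i\<close> i_less_n by simp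
      then show False using \<open>m j > m i\<close> by simp
    qed
    then have "deg n E j = n - 1" using full by simp
    then have "E j k"
      using deg_eq_iff_dominating[of j] \<open>j < i\<close> \<open>k < n\<close> \<open>k \<noteq> j\<close> i_less_n by simp
    then show "E k j \<and> dpow j = ratio_max * dpow k"
      using adj_sym[of j k] \<open>k < n\<close> \<open>j < i\<close> i_less_n dpow_alpha_zero[OF \<open>\<alpha> = 0\<close>]
        ratio_max_alpha_zero[OF \<open>\<alpha> = 0\<close>] by simp
  qed
qed

lemma ratio_max_dominating_vertex:
  assumes dominating: "\<forall>k<n. k \<noteq> 0 \<longrightarrow> E 0 k"
    and leaves: "\<And>k. 1 \<le> k \<Longrightarrow> k < n \<Longrightarrow> dpow k = dpow 1" and "dpow 1 < dpow 0"
  shows "ratio_max = dpow 0 / dpow 1"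
  unfolding ratio_max_def
proof (rule Max_eqI[OF finite_ratio_set])
  have "1 < n" using two_le_n by simp
  then have "E 1 0" using dominating adj_sym[of 0 1] by simp
  then show "dpow 0 / dpow 1 \<in> {dpow b / dpow a | a b. a < n \<and> b < n \<and> E a b}"
    using \<open>1 < n\<close> by (intro CollectI exI[of _ 1] exI[of _ 0]) simp
  have pos: "dpow 1 > 0" using dpow_pos \<open>1 < n\<close> by simp
  fix r assume "r \<in> {dpow b / dpow a | a b. a < n \<and> b < n \<and> E a b}"
  then obtain a b where ab: "a < n" "b < n" "E a b" and r: "r = dpow b / dpow a" by blast
  have ge1: "1 \<le> dpow 0 / dpow 1" using \<open>dpow 1 < dpow 0\<close> pos by simp
  show "r \<le> dpow 0 / dpow 1"
  proof (cases "a = 0")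
    case True
    then have "b \<noteq> 0" using \<open>E a b\<close> adj_irrefl[of 0] by metis
    then have "r = dpow 1 / dpow 0" using r True leaves[of b] \<open>b < n\<close> by simp
    also have "\<dots> \<le> 1" using \<open>dpow 1 < dpow 0\<close> pos by simp
    finally show ?thesis using ge1 by linarith
  next
    case False
    then have "r = dpow b / dpow 1" using r leaves[of a] \<open>a < n\<close> by simp
    moreover have "b = 0 \<or> dpow b = dpow 1" using leaves[of b] \<open>b < n\<close> by linarith
    ultimately show ?thesis using ge1 pos by auto
  qed
qed

lemma tight_if_equality_case_alpha_pos:
  assumes case_pos: equality_case_alpha_pos and "1 \<le> i"
  shows tight
proof -
  have "\<alpha> > 0" and m_leaves: "\<forall>k. 1 \<le> k \<and> k < n \<longrightarrow> m k = m 1"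
    and "deg n E 0 = n - 1" "deg n E 0 > deg n E 1"
    and deg_leaves: "\<forall>k. 1 \<le> k \<and> k < n \<longrightarrow> deg n E k = deg n E 1"
    using case_pos unfolding equality_case_alpha_pos_def by blast+
  have "1 < n" using two_le_n by simp
  have dominating: "\<forall>k<n. k \<noteq> 0 \<longrightarrow> E 0 k"
    using \<open>deg n E 0 = n - 1\<close> deg_eq_iff_dominating[of 0] \<open>1 < n\<close> by simp
  have dpow_leaves: "dpow k = dpow 1" if "1 \<le> k" "k < n" for k
    using deg_leaves[rule_format, of k] that unfolding dpow_def by simp
  have "dpow 1 < dpow 0"
    unfolding dpow_def using \<open>\<alpha> > 0\<close> \<open>deg n E 0 > deg n E 1\<close> deg_pos[OF \<open>1 < n\<close>]
    by (simp add: powr_less_mono2)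
  have ratio: "ratio_max = dpow 0 / dpow 1"
    using dominating dpow_leaves \<open>dpow 1 < dpow 0\<close> by (rule ratio_max_dominating_vertex)
  have "m i = m 1" using m_leaves[rule_format, of i] \<open>1 \<le> i\<close> i_less_n by simp
  show tight unfolding tight_def
  proof (rule conjI; intro allI impI)
    fix k assume "i \<le> k \<and> k < n"
    then show "m k = m i" using m_leaves[rule_format, of k] \<open>m i = m 1\<close> \<open>1 \<le> i\<close> by simp
  next
    fix j k assume "j < i" "m j > m i" "k < n" "k \<noteq> j"
    have "j = 0"
    proof (rule ccontr)
      assume "j \<noteq> 0"
      then have "m j = m i" using m_leaves[rule_format, of j] \<open>m i = m 1\<close> \<open>j < i\<close> i_less_n by simp
      then show False using \<open>m j > m i\<close> by simp
    qed
    then have "E k j" using dominating adj_sym[of 0 k] \<open>k < n\<close> \<open>k \<noteq> j\<close> by simp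
    moreover have "dpow k = dpow 1" using dpow_leaves[of k] \<open>k < n\<close> \<open>k \<noteq> j\<close> \<open>j = 0\<close> by simp
    ultimately show "E k j \<and> dpow j = ratio_max * dpow k"
      using ratio dpow_pos[OF \<open>1 < n\<close>] \<open>j = 0\<close> by simp
  qed
qed

lemma tight_imp_m_eq: "tight \<Longrightarrow> i \<le> k \<Longrightarrow> k < n \<Longrightarrow> m k = m i"
  unfolding tight_def by blast

lemma tight_imp_extremal_ratio:
  "tight \<Longrightarrow> j < i \<Longrightarrow> m j > m i \<Longrightarrow> k < n \<Longrightarrow> k \<noteq> j \<Longrightarrow> E k j \<and> dpow j = ratio_max * dpow k"
  unfolding tight_def by blast

lemma tight_imp_dominating:
  assumes tight "j < i" "m j > m i"
  shows "deg n E j = n - 1"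
proof -
  have "\<forall>k<n. k \<noteq> j \<longrightarrow> E k j" using tight_imp_extremal_ratio assms by blast
  then have "\<forall>k<n. k \<noteq> j \<longrightarrow> E j k" using adj_sym by blast
  then show ?thesis using deg_eq_iff_dominating \<open>j < i\<close> i_less_n by simp
qed

text \<open>For \<open>\<alpha> \<noteq> 0\<close> a second dominating vertex forces \<open>ratio_max = 1\<close>, hence a complete
  graph, where all \<open>m k\<close> coincide.\<close>

lemma tight_imp_unique_dominating:
  assumes tight "\<alpha> \<noteq> 0" "j < i" "m j > m i" "k < n" "k \<noteq> j"
  shows "deg n E k \<noteq> n - 1"
proof
  assume deg_k: "deg n E k = n - 1"
  have "j < n" using \<open>j < i\<close> i_less_n by simp
  have deg_j: "deg n E j = n - 1" using tight_imp_dominating assms by blast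
  have ratio: "dpow j = ratio_max * dpow l" if "l < n" "l \<noteq> j" for l
    using tight_imp_extremal_ratio assms(1,3,4) that by blast
  have "dpow k = dpow j" unfolding dpow_def using deg_k deg_j by simp
  then have "ratio_max = 1" using ratio[OF \<open>k < n\<close> \<open>k \<noteq> j\<close>] dpow_pos[OF \<open>k < n\<close>] by simp
  then have "deg n E l = n - 1" if "l < n" for l
    using ratio[of l] dpow_inj[OF \<open>\<alpha> \<noteq> 0\<close> that \<open>j < n\<close>] deg_j that by (cases "l = j") auto
  then have "\<forall>l<n. deg n E l = n - 1" by blast
  then have "m j = m i"
    using m_eq_deg_if_regular[of "n - 1"] \<open>j < n\<close> i_less_n by simp
  then show False using \<open>m j > m i\<close> by simp
qed

lemma tight_imp_equality_case_alpha_zero: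
  assumes tight "\<alpha> = 0" "j0 < i" "m j0 > m i"
  shows "\<exists>t. 1 \<le> t \<and> t \<le> i \<and> equality_case_alpha_zero t"
proof -
  define t where "t = (LEAST k. m k = m i)"
  have "t \<le> i" unfolding t_def by (rule Least_le) simp
  have m_t: "m t = m i" unfolding t_def by (rule LeastI[of _ i]) simp
  have "t < n" using \<open>t \<le> i\<close> i_less_n by simp
  have "m 0 > m i" using gavg_antimono[of 0 j0] assms(3,4) i_less_n by simp
  then have "t \<noteq> 0" using m_t by (metis less_irrefl)
  have full: "deg n E k = n - 1" if "k < t" for k
  proof -
    have "m k \<noteq> m i" using not_less_Least[of k "\<lambda>k. m k = m i"] that unfolding t_def by blast
    moreover have "k < i" using that \<open>t \<le> i\<close> by simp
    ultimately show ?thesis using tight_imp_dominating[OF \<open>tight\<close>] m_ge_m_i[of k] by fastforce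
  qed
  have deg_tail: "deg n E k = deg n E t" if "t \<le> k" "k < n" for k
  proof -
    have "m k \<le> m i" using gavg_antimono[OF that] m_t by simp
    moreover have "m k \<ge> m i"
      using m_ge_m_i[of k] tight_imp_m_eq[OF \<open>tight\<close>, of k] that by (cases "k < i") auto
    ultimately show ?thesis using m_alpha_zero[OF \<open>\<alpha> = 0\<close>] that \<open>t < n\<close> m_t by simp
  qed
  have "deg n E 0 = n - 1" using full \<open>t \<noteq> 0\<close> by simp
  moreover have "deg n E t < n - 1"
    using \<open>m 0 > m i\<close> m_t m_alpha_zero[OF \<open>\<alpha> = 0\<close>] \<open>t < n\<close> two_le_n calculation by simp
  moreover have "bidegreed n E"
  proof (rule bidegreedI)
    show "\<forall>k<n. deg n E k = n - 1 \<or> deg n E k = deg n E t"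
      using full deg_tail by (meson not_le)
  qed (use calculation \<open>t < n\<close> in auto)
  ultimately have "equality_case_alpha_zero t"
    unfolding equality_case_alpha_zero_def using \<open>\<alpha> = 0\<close> full deg_tail by blast
  then show ?thesis using \<open>t \<noteq> 0\<close> \<open>t \<le> i\<close> by (intro exI[of _ t]) simp
qed

lemma tight_imp_alpha_nonneg:
  assumes tight "j0 < i" "m j0 > m i"
  shows "\<alpha> \<ge> 0"
proof (rule ccontr)
  assume "\<not> \<alpha> \<ge> 0"
  define k where "k = (if j0 = 0 then 1 else 0 :: nat)"
  have "k < n" "k \<noteq> j0" using two_le_n unfolding k_def by auto
  have "j0 < n" using assms(2) i_less_n by simp
  have "deg n E k < deg n E j0"
    using tight_imp_unique_dominating[OF assms(1) _ assms(2,3) \<open>k < n\<close> \<open>k \<noteq> j0\<close>]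
      tight_imp_dominating[OF assms] deg_le[OF \<open>k < n\<close>] \<open>\<not> \<alpha> \<ge> 0\<close> by fastforce
  then have "dpow j0 < dpow k"
    unfolding dpow_def using \<open>\<not> \<alpha> \<ge> 0\<close> deg_pos[OF \<open>k < n\<close>] by (simp add: powr_less_mono2_neg)
  moreover have "dpow j0 = ratio_max * dpow k"
    using tight_imp_extremal_ratio[OF assms \<open>k < n\<close> \<open>k \<noteq> j0\<close>] by blast
  ultimately show False using one_le_ratio_max dpow_pos[OF \<open>k < n\<close>]
    by (smt (verit) mult_le_cancel_right1)
qed

lemma tight_imp_equality_case_alpha_pos:
  assumes tight "\<alpha> > 0" "j0 < i" "m j0 > m i"
  shows equality_case_alpha_pos
proof -
  have "1 < n" using two_le_n by simp
  have "0 < i" using \<open>j0 < i\<close> by simp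
  have "m 0 > m i" using gavg_antimono[of 0 j0] assms(3,4) i_less_n by simp
  then have deg_0: "deg n E 0 = n - 1" using tight_imp_dominating[OF \<open>tight\<close> \<open>0 < i\<close>] by blast
  have leaf_not_full: "deg n E k \<noteq> n - 1" if "k \<noteq> 0" "k < n" for k
    using tight_imp_unique_dominating[OF \<open>tight\<close> _ \<open>0 < i\<close> \<open>m 0 > m i\<close> that(2,1)] \<open>\<alpha> > 0\<close>
    by simp
  have dpow_leaf: "dpow 0 = ratio_max * dpow k" if "k \<noteq> 0" "k < n" for k
    using tight_imp_extremal_ratio[OF \<open>tight\<close> \<open>0 < i\<close> \<open>m 0 > m i\<close> that(2,1)] by blast
  have deg_leaf: "deg n E k = deg n E 1" if "1 \<le> k" "k < n" for k
  proof -
    have "dpow 0 = ratio_max * dpow k" "dpow 0 = ratio_max * dpow 1"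
      using dpow_leaf[of k] dpow_leaf[of 1] that \<open>1 < n\<close> by simp_all
    then have "ratio_max * dpow k = ratio_max * dpow 1" by linarith
    then have "dpow k = dpow 1" using one_le_ratio_max by simp
    then show ?thesis using dpow_inj[of k 1] \<open>\<alpha> > 0\<close> that \<open>1 < n\<close> by simp
  qed
  have m_leaf: "m k = m i" if "1 \<le> k" "k < n" for k
  proof (cases "k < i")
    case True
    have "\<not> m k > m i" using tight_imp_dominating[OF \<open>tight\<close> True] leaf_not_full that by auto
    then show ?thesis using m_ge_m_i[OF True] by simp
  next
    case False
    then show ?thesis using tight_imp_m_eq[OF \<open>tight\<close>, of k] that by simp
  qed
  have "deg n E 1 < n - 1" using leaf_not_full[of 1] deg_le[of 1] \<open>1 < n\<close> by simp
  then have "deg n E 1 < deg n E 0" using deg_0 by simp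
  moreover have "bidegreed n E"
  proof (rule bidegreedI)
    show "\<forall>k<n. deg n E k = n - 1 \<or> deg n E k = deg n E 1"
      using deg_0 deg_leaf by (metis less_one not_le)
  qed (use deg_0 \<open>deg n E 1 < n - 1\<close> \<open>1 < n\<close> in auto)
  moreover have "m 1 = m i" using m_leaf[of 1] \<open>1 < n\<close> by simp
  then have "m 0 > m 1" using \<open>m 0 > m i\<close> by simp
  moreover have "\<forall>k. 1 \<le> k \<and> k < n \<longrightarrow> m k = m 1" using m_leaf \<open>m 1 = m i\<close> by metis
  moreover have "\<forall>k. 1 \<le> k \<and> k < n \<longrightarrow> deg n E k = deg n E 1" using deg_leaf by blast
  ultimately show ?thesis
    unfolding equality_case_alpha_pos_def using \<open>\<alpha> > 0\<close> deg_0 by blast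
qed

lemma tight_iff_equality_cases:
  "tight \<longleftrightarrow> (\<forall>k<n. m k = m 0) \<or>
     (\<exists>t. 1 \<le> t \<and> t \<le> i \<and> (equality_case_alpha_zero t \<or> equality_case_alpha_pos))"
proof
  assume tight
  show "(\<forall>k<n. m k = m 0) \<or>
     (\<exists>t. 1 \<le> t \<and> t \<le> i \<and> (equality_case_alpha_zero t \<or> equality_case_alpha_pos))"
  proof (cases "\<exists>j<i. m j > m i")
    case False
    have "m k = m i" if "k < n" for k
      using False m_ge_m_i[of k] tight_imp_m_eq[OF \<open>tight\<close> _ that] by (cases "k < i") auto
    then have "\<forall>k<n. m k = m 0" using two_le_n by simp
    then show ?thesis ..
  next
    case True
    then obtain j0 where j0: "j0 < i" "m j0 > m i" by blast
    have "\<alpha> = 0 \<or> \<alpha> > 0" using tight_imp_alpha_nonneg[OF \<open>tight\<close> j0] by auto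
    then show ?thesis
      using tight_imp_equality_case_alpha_zero[OF \<open>tight\<close> _ j0]
        tight_imp_equality_case_alpha_pos[OF \<open>tight\<close> _ j0] j0(1) by fastforce
  qed
next
  assume "(\<forall>k<n. m k = m 0) \<or>
     (\<exists>t. 1 \<le> t \<and> t \<le> i \<and> (equality_case_alpha_zero t \<or> equality_case_alpha_pos))"
  then show tight
    using tight_if_gavg_const tight_if_equality_case_alpha_zero tight_if_equality_case_alpha_pos
    by fastforce
qed

end

theorem theorem3:
  fixes n :: nat and E :: "nat \<Rightarrow> nat \<Rightarrow> bool" and \<alpha> :: real and i :: nat
  assumes "n \<ge> 2"
    and "simple_graph n E"
    and "connected_graph n E"
    and "\<And>k l. k \<le> l \<Longrightarrow> l < n \<Longrightarrow> gavg n E \<alpha> k \<ge> gavg n E \<alpha> l"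
    and "i < n"
  defines "N \<equiv> Max {real (deg n E b) powr \<alpha> / real (deg n E a) powr \<alpha> | a b.
                      a < n \<and> b < n \<and> E a b}"
  defines "m \<equiv> gavg n E \<alpha>"
  defines "B \<equiv> (m i - N + sqrt ((m i + N)\<^sup>2 + 4 * N * (\<Sum>k<i. m k - m i))) / 2"
  shows "adj_spectral_radius n E \<le> B \<and>
    (adj_spectral_radius n E = B \<longleftrightarrow>
      (\<forall>k<n. m k = m 0) \<or>
      (\<exists>t. 1 \<le> t \<and> t \<le> i \<and>
         ((\<alpha> = 0 \<and> bidegreed n E \<and> (\<forall>k<t. deg n E k = n - 1) \<and> deg n E t < n - 1 \<and>
             (\<forall>k. t \<le> k \<and> k < n \<longrightarrow> deg n E k = deg n E t)) \<or>
          (\<alpha> > 0 \<and> bidegreed n E \<and> m 0 > m 1 \<and> (\<forall>k. 1 \<le> k \<and> k < n \<longrightarrow> m k = m 1) \<and>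
             deg n E 0 = n - 1 \<and> deg n E 0 > deg n E 1 \<and>
             (\<forall>k. 1 \<le> k \<and> k < n \<longrightarrow> deg n E k = deg n E 1)))))"
proof -
  interpret gavg_ordered_graph n E \<alpha> i
    using assms(1-5) by unfold_locales
  have "B = bound"
    unfolding B_def m_def N_def bound_def ratio_max_def dpow_def ..
  then show ?thesis
    using adj_spectral_radius_le_bound tight_iff_equality_cases
    unfolding m_def equality_case_alpha_zero_def equality_case_alpha_pos_def by simp
qed

end
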